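(* Let $G=(V,S,\sigma,w,\theta,\pi)$ be a restaking network with $\theta(s)>0$ and $\sum_{v'\in V}w(v',s)>0$ for all $s\in S$, and suppose the cost of a validator in an attack $\alpha$ is replaced by the all-or-nothing cost $c'_v(\alpha)=\sigma(v)$ if $\sum_{s\in S_\alpha}\alpha(v,s)>0$ and $c'_v(\alpha)=0$ otherwise (with total cost $C'(\alpha)=\sum_{v}c'_v(\alpha)$). If for every validator $v\in V$ $$\sum_{s\in S}\frac{w(v,s)}{\sum_{v'\in V}w(v',s)}\cdot\frac{\pi(s)}{\theta(s)}<\sigma(v),$$ then there is no attack $\alpha$ with $S_\alpha\neq\emptyset$ and $C'(\alpha)\le\Pi(\alpha)$; i.e., $G$ is secure under this cost model.
   Context: A restaking network is a tuple $G=(V,S,\sigma,w,\theta,\pi)$ with finite nonempty validator set $V$, finite service set $S$, stake $\sigma:V\to\mathbb{R}_{>0}$, allocation $w:V\times S\to\mathbb{R}_{\ge0}$ with $w(v,s)\le\sigma(v)$, thresholds $\theta:S\to[0,1]$ and prizes $\pi:S\to\mathbb{R}_{>0}$. An attack is $\alpha:V\times S\to\mathbb{R}_{\ge0}$ with $\alpha(v,s)\le w(v,s)$; its attacked services are $S_\alpha=\{s:\sum_v\alpha(v,s)\ge\theta(s)\sum_v w(v,s)\}$ and its prize is $\Pi(\alpha)=\sum_{s\in S_\alpha}\pi(s)$. *)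

theory Defs
  imports Complex_Main
begin

definition restaking_network ::
  "'v set \<Rightarrow> 's set \<Rightarrow> ('v \<Rightarrow> real) \<Rightarrow> ('v \<Rightarrow> 's \<Rightarrow> real) \<Rightarrow> ('s \<Rightarrow> real) \<Rightarrow> ('s \<Rightarrow> real) \<Rightarrow> bool" where
  "restaking_network V S \<sigma> w \<theta> \<pi> \<longleftrightarrow>
     finite V \<and> V \<noteq> {} \<and> finite S \<and>
     (\<forall>v\<in>V. \<sigma> v > 0) \<and>
     (\<forall>v\<in>V. \<forall>s\<in>S. 0 \<le> w v s \<and> w v s \<le> \<sigma> v) \<and>
     (\<forall>s\<in>S. 0 \<le> \<theta> s \<and> \<theta> s \<le> 1) \<and>
     (\<forall>s\<in>S. \<pi> s > 0)"

definition is_attack :: "'v set \<Rightarrow> 's set \<Rightarrow> ('v \<Rightarrow> 's \<Rightarrow> real) \<Rightarrow> ('v \<Rightarrow> 's \<Rightarrow> real) \<Rightarrow> bool" where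
  "is_attack V S w \<alpha> \<longleftrightarrow> (\<forall>v\<in>V. \<forall>s\<in>S. 0 \<le> \<alpha> v s \<and> \<alpha> v s \<le> w v s)"

definition attacked_services ::
  "'v set \<Rightarrow> 's set \<Rightarrow> ('v \<Rightarrow> 's \<Rightarrow> real) \<Rightarrow> ('s \<Rightarrow> real) \<Rightarrow> ('v \<Rightarrow> 's \<Rightarrow> real) \<Rightarrow> 's set" where
  "attacked_services V S w \<theta> \<alpha> = {s\<in>S. (\<Sum>v\<in>V. \<alpha> v s) \<ge> \<theta> s * (\<Sum>v\<in>V. w v s)}"

definition attack_prize ::
  "'v set \<Rightarrow> 's set \<Rightarrow> ('v \<Rightarrow> 's \<Rightarrow> real) \<Rightarrow> ('s \<Rightarrow> real) \<Rightarrow> ('s \<Rightarrow> real) \<Rightarrow> ('v \<Rightarrow> 's \<Rightarrow> real) \<Rightarrow> real" where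
  "attack_prize V S w \<theta> \<pi> \<alpha> = (\<Sum>s\<in>attacked_services V S w \<theta> \<alpha>. \<pi> s)"

definition aon_cost ::
  "'v set \<Rightarrow> 's set \<Rightarrow> ('v \<Rightarrow> real) \<Rightarrow> ('v \<Rightarrow> 's \<Rightarrow> real) \<Rightarrow> ('s \<Rightarrow> real) \<Rightarrow> ('v \<Rightarrow> 's \<Rightarrow> real) \<Rightarrow> 'v \<Rightarrow> real" where
  "aon_cost V S \<sigma> w \<theta> \<alpha> v =
     (if (\<Sum>s\<in>attacked_services V S w \<theta> \<alpha>. \<alpha> v s) > 0 then \<sigma> v else 0)"

definition aon_total_cost ::
  "'v set \<Rightarrow> 's set \<Rightarrow> ('v \<Rightarrow> real) \<Rightarrow> ('v \<Rightarrow> 's \<Rightarrow> real) \<Rightarrow> ('s \<Rightarrow> real) \<Rightarrow> ('v \<Rightarrow> 's \<Rightarrow> real) \<Rightarrow> real" where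
  "aon_total_cost V S \<sigma> w \<theta> \<alpha> = (\<Sum>v\<in>V. aon_cost V S \<sigma> w \<theta> \<alpha> v)"

end

theory Submission
  imports Defs
begin

text \<open>Every attacked service s needs attacking stake at least \<theta> s times its total stake W s,
and only validators that take part in the attack contribute to it. Splitting the prize \<pi> s
among these validators in proportion to their allocation w v s / W s therefore gives each of
them at most its share (w v s / W s) (\<pi> s / \<theta> s), so the prize is at most the participants'
summed shares over all services. By hypothesis this is strictly less than their total stake,
which is exactly the all-or-nothing cost of the attack; the participants are nonempty because
some service is attacked.\<close>

definition prize_share ::
  "'v set \<Rightarrow> ('v \<Rightarrow> 's \<Rightarrow> real) \<Rightarrow> ('s \<Rightarrow> real) \<Rightarrow> ('s \<Rightarrow> real) \<Rightarrow> 'v \<Rightarrow> 's \<Rightarrow> real" where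
  "prize_share V w \<theta> \<pi> v s = (w v s / (\<Sum>v'\<in>V. w v' s)) * (\<pi> s / \<theta> s)"

definition attackers ::
  "'v set \<Rightarrow> 's set \<Rightarrow> ('v \<Rightarrow> 's \<Rightarrow> real) \<Rightarrow> ('s \<Rightarrow> real) \<Rightarrow> ('v \<Rightarrow> 's \<Rightarrow> real) \<Rightarrow> 'v set" where
  "attackers V S w \<theta> \<alpha> = {v\<in>V. (\<Sum>s\<in>attacked_services V S w \<theta> \<alpha>. \<alpha> v s) > 0}"

lemma attacked_services_subset: "attacked_services V S w \<theta> \<alpha> \<subseteq> S"
  unfolding attacked_services_def by auto

lemma attackers_subset: "attackers V S w \<theta> \<alpha> \<subseteq> V"
  unfolding attackers_def by auto

lemma aon_total_cost_eq_sum_attackers: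
  assumes "finite V"
  shows "aon_total_cost V S \<sigma> w \<theta> \<alpha> = (\<Sum>v\<in>attackers V S w \<theta> \<alpha>. \<sigma> v)"
proof -
  have "aon_total_cost V S \<sigma> w \<theta> \<alpha> = (\<Sum>v\<in>V. if v \<in> attackers V S w \<theta> \<alpha> then \<sigma> v else 0)"
    unfolding aon_total_cost_def aon_cost_def attackers_def by (rule sum.cong) simp_all
  also have "\<dots> = (\<Sum>v\<in>V \<inter> attackers V S w \<theta> \<alpha>. \<sigma> v)"
    using sum.inter_restrict[OF assms] by metis
  also have "\<dots> = (\<Sum>v\<in>attackers V S w \<theta> \<alpha>. \<sigma> v)"
    using attackers_subset by (metis Int_absorb1)
  finally show ?thesis .
qed

lemma attack_zero_outside_attackers:
  assumes "finite S" "is_attack V S w \<alpha>"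
    and "v \<in> V - attackers V S w \<theta> \<alpha>" "s \<in> attacked_services V S w \<theta> \<alpha>"
  shows "\<alpha> v s = 0"
proof -
  let ?A = "attacked_services V S w \<theta> \<alpha>"
  have "v \<in> V" "\<not> 0 < (\<Sum>t\<in>?A. \<alpha> v t)"
    using assms(3) unfolding attackers_def by auto
  have nonneg: "\<forall>t\<in>?A. 0 \<le> \<alpha> v t"
  proof
    fix t assume "t \<in> ?A"
    then have "t \<in> S" by (rule subsetD[OF attacked_services_subset])
    with \<open>v \<in> V\<close> assms(2) show "0 \<le> \<alpha> v t" by (simp add: is_attack_def)
  qed
  then have "0 \<le> (\<Sum>t\<in>?A. \<alpha> v t)"
    by (simp add: sum_nonneg)
  with \<open>\<not> 0 < (\<Sum>t\<in>?A. \<alpha> v t)\<close> have "(\<Sum>t\<in>?A. \<alpha> v t) = 0"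
    by linarith
  moreover have "finite ?A"
    by (rule finite_subset[OF attacked_services_subset assms(1)])
  ultimately show ?thesis
    using sum_nonneg_eq_0_iff nonneg assms(4) by metis
qed

lemma attacked_service_threshold_le_attackers_stake:
  assumes "finite V" "finite S" "is_attack V S w \<alpha>"
    and s: "s \<in> attacked_services V S w \<theta> \<alpha>"
  shows "\<theta> s * (\<Sum>v\<in>V. w v s) \<le> (\<Sum>v\<in>attackers V S w \<theta> \<alpha>. w v s)"
proof -
  let ?B = "attackers V S w \<theta> \<alpha>"
  have "s \<in> S"
    using s attacked_services_subset ..
  have "\<theta> s * (\<Sum>v\<in>V. w v s) \<le> (\<Sum>v\<in>V. \<alpha> v s)"
    using s by (simp add: attacked_services_def)
  also have "\<dots> = (\<Sum>v\<in>?B. \<alpha> v s)"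
  proof (intro sum.mono_neutral_right[OF assms(1) attackers_subset] ballI)
    fix v assume "v \<in> V - ?B"
    then show "\<alpha> v s = 0"
      by (rule attack_zero_outside_attackers[OF assms(2,3) _ s])
  qed
  also have "\<dots> \<le> (\<Sum>v\<in>?B. w v s)"
  proof (rule sum_mono)
    fix v assume "v \<in> ?B"
    then have "v \<in> V" by (rule subsetD[OF attackers_subset])
    with assms(3) \<open>s \<in> S\<close> show "\<alpha> v s \<le> w v s"
      by (simp add: is_attack_def)
  qed
  finally show ?thesis .
qed

lemma le_sum_proportional_shares:
  fixes x :: "'a \<Rightarrow> real"
  assumes "0 < \<theta>" "0 < W" "0 \<le> p" "\<theta> * W \<le> (\<Sum>v\<in>B. x v)"
  shows "p \<le> (\<Sum>v\<in>B. (x v / W) * (p / \<theta>))"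
proof -
  have "p = (p / (\<theta> * W)) * (\<theta> * W)"
    using assms(1,2) by simp
  also have "\<dots> \<le> (p / (\<theta> * W)) * (\<Sum>v\<in>B. x v)"
    using assms by (intro mult_left_mono) auto
  also have "\<dots> = (\<Sum>v\<in>B. (x v / W) * (p / \<theta>))"
    unfolding sum_distrib_left using assms(1,2) by (intro sum.cong refl) (simp add: field_simps)
  finally show ?thesis .
qed

lemma attackers_nonempty:
  assumes "finite V" "finite S" "is_attack V S w \<alpha>"
    and pos: "\<forall>s\<in>S. 0 < \<theta> s \<and> 0 < (\<Sum>v\<in>V. w v s)"
    and "attacked_services V S w \<theta> \<alpha> \<noteq> {}"
  shows "attackers V S w \<theta> \<alpha> \<noteq> {}"
proof
  assume empty: "attackers V S w \<theta> \<alpha> = {}"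
  obtain s where s: "s \<in> attacked_services V S w \<theta> \<alpha>"
    using assms(5) by auto
  then have "s \<in> S" by (rule subsetD[OF attacked_services_subset])
  with pos have "0 < \<theta> s * (\<Sum>v\<in>V. w v s)" by simp
  with attacked_service_threshold_le_attackers_stake[OF assms(1-3) s] empty
  show False by simp
qed

lemma attack_prize_le_attackers_shares:
  assumes net: "restaking_network V S \<sigma> w \<theta> \<pi>" and "is_attack V S w \<alpha>"
    and pos: "\<forall>s\<in>S. 0 < \<theta> s \<and> 0 < (\<Sum>v\<in>V. w v s)"
  shows "attack_prize V S w \<theta> \<pi> \<alpha>
           \<le> (\<Sum>v\<in>attackers V S w \<theta> \<alpha>. \<Sum>s\<in>S. prize_share V w \<theta> \<pi> v s)"
proof -
  let ?A = "attacked_services V S w \<theta> \<alpha>" and ?B = "attackers V S w \<theta> \<alpha>"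
  have fin: "finite V" "finite S" and pi_pos: "\<forall>s\<in>S. 0 < \<pi> s"
    and w_nonneg: "\<forall>v\<in>V. \<forall>s\<in>S. 0 \<le> w v s"
    using net unfolding restaking_network_def by auto
  have "attack_prize V S w \<theta> \<pi> \<alpha> = (\<Sum>s\<in>?A. \<pi> s)"
    unfolding attack_prize_def ..
  also have "\<dots> \<le> (\<Sum>s\<in>?A. \<Sum>v\<in>?B. prize_share V w \<theta> \<pi> v s)"
  proof (rule sum_mono)
    fix s assume s: "s \<in> ?A"
    then have "s \<in> S" by (rule subsetD[OF attacked_services_subset])
    then have "0 < \<theta> s" "0 < (\<Sum>v\<in>V. w v s)" "0 \<le> \<pi> s"
      using pos pi_pos by (auto simp: less_imp_le)
    from le_sum_proportional_shares[OF this
        attacked_service_threshold_le_attackers_stake[OF fin assms(2) s]]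
    show "\<pi> s \<le> (\<Sum>v\<in>?B. prize_share V w \<theta> \<pi> v s)"
      unfolding prize_share_def .
  qed
  also have "\<dots> = (\<Sum>v\<in>?B. \<Sum>s\<in>?A. prize_share V w \<theta> \<pi> v s)"
    by (rule sum.swap)
  also have "\<dots> \<le> (\<Sum>v\<in>?B. \<Sum>s\<in>S. prize_share V w \<theta> \<pi> v s)"
  proof (rule sum_mono)
    fix v assume "v \<in> ?B"
    then have "v \<in> V" by (rule subsetD[OF attackers_subset])
    have share_nonneg: "0 \<le> prize_share V w \<theta> \<pi> v s" if "s \<in> S" for s
      using \<open>v \<in> V\<close> that pos pi_pos w_nonneg unfolding prize_share_def
      by (intro mult_nonneg_nonneg divide_nonneg_nonneg) (auto simp: less_imp_le)
    show "(\<Sum>s\<in>?A. prize_share V w \<theta> \<pi> v s) \<le> (\<Sum>s\<in>S. prize_share V w \<theta> \<pi> v s)"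
      by (rule sum_mono2[OF fin(2) attacked_services_subset]) (simp add: share_nonneg)
  qed
  finally show ?thesis .
qed

theorem mainTheorem3:
  fixes V :: "'v set" and S :: "'s set" and \<sigma> :: "'v \<Rightarrow> real"
    and w :: "'v \<Rightarrow> 's \<Rightarrow> real" and \<theta> \<pi> :: "'s \<Rightarrow> real"
  assumes net: "restaking_network V S \<sigma> w \<theta> \<pi>"
    and theta_pos: "\<forall>s\<in>S. \<theta> s > 0"
    and wsum_pos: "\<forall>s\<in>S. (\<Sum>v'\<in>V. w v' s) > 0"
    and cond: "\<forall>v\<in>V. (\<Sum>s\<in>S. (w v s / (\<Sum>v'\<in>V. w v' s)) * (\<pi> s / \<theta> s)) < \<sigma> v"
  shows "\<not> (\<exists>\<alpha>. is_attack V S w \<alpha> \<and> attacked_services V S w \<theta> \<alpha> \<noteq> {} \<and>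
              aon_total_cost V S \<sigma> w \<theta> \<alpha> \<le> attack_prize V S w \<theta> \<pi> \<alpha>)"
proof clarify
  fix \<alpha>
  assume attack: "is_attack V S w \<alpha>" and attacked: "attacked_services V S w \<theta> \<alpha> \<noteq> {}"
    and profitable: "aon_total_cost V S \<sigma> w \<theta> \<alpha> \<le> attack_prize V S w \<theta> \<pi> \<alpha>"
  let ?B = "attackers V S w \<theta> \<alpha>"
  have fin: "finite V" "finite S"
    using net unfolding restaking_network_def by auto
  have pos: "\<forall>s\<in>S. 0 < \<theta> s \<and> 0 < (\<Sum>v\<in>V. w v s)"
    using theta_pos wsum_pos by blast
  have "finite ?B"
    using fin(1) attackers_subset by (rule finite_subset[rotated])
  have "attack_prize V S w \<theta> \<pi> \<alpha> \<le> (\<Sum>v\<in>?B. \<Sum>s\<in>S. prize_share V w \<theta> \<pi> v s)"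
    by (rule attack_prize_le_attackers_shares[OF net attack pos])
  also have "\<dots> < (\<Sum>v\<in>?B. \<sigma> v)"
  proof (rule sum_strict_mono[OF \<open>finite ?B\<close> attackers_nonempty[OF fin attack pos attacked]])
    fix v assume "v \<in> ?B"
    then have "v \<in> V" by (rule subsetD[OF attackers_subset])
    then show "(\<Sum>s\<in>S. prize_share V w \<theta> \<pi> v s) < \<sigma> v"
      unfolding prize_share_def by (rule bspec[OF cond])
  qed
  also have "\<dots> = aon_total_cost V S \<sigma> w \<theta> \<alpha>"
    by (rule aon_total_cost_eq_sum_attackers[OF fin(1), symmetric])
  finally show False
    using profitable by simp
qed

end
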